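(* Let $\pi_2$ be the five-dimensional complex associative algebra with basis $e_1,\dots,e_5$ and nonzero products $e_1e_1=e_2$, $e_1e_2=e_2e_1=e_3$, $e_1e_4=e_4e_1=e_5$, $e_4e_4=e_5$ (all other products of basis elements are zero). The group $LocAut(\pi_2)$ of all local automorphisms of $\pi_2$ is a Lie group.
   Context: An automorphism is a bijective linear map $\Phi$ with $\Phi(xy)=\Phi(x)\Phi(y)$; a linear map $\Phi$ is a local automorphism if for every $\nu$ there is an automorphism $\varphi_\nu$ with $\Phi(\nu)=\varphi_\nu(\nu)$. Local automorphisms of a finite-dimensional algebra form a group under composition; $LocAut(\pi_2)$ is regarded as a set of $5\times 5$ matrices (with respect to the basis $e_1,\dots,e_5$). *)

theory Defs
  imports "HOL-Analysis.Analysis"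
begin

text \<open>Vectors of pi_2 are elements of complex^5; the basis vector e_k is the k-th
  coordinate vector, coordinates indexed by the numerals 1,2,3,4,5 of type 5
  (note that 5 = 0 in type 5, which is harmless: it is just the fifth index).\<close>

definition basis5 :: "5 \<Rightarrow> complex ^ 5" where
  "basis5 k = (\<chi> i. if i = k then 1 else 0)"

definition pi2_table :: "5 \<Rightarrow> 5 \<Rightarrow> complex ^ 5" where
  "pi2_table i j =
     (if i = 1 \<and> j = 1 then basis5 2
      else if (i = 1 \<and> j = 2) \<or> (i = 2 \<and> j = 1) then basis5 3
      else if (i = 1 \<and> j = 4) \<or> (i = 4 \<and> j = 1) then basis5 5
      else if i = 4 \<and> j = 4 then basis5 5
      else 0)"

definition pi2_mult :: "complex ^ 5 \<Rightarrow> complex ^ 5 \<Rightarrow> complex ^ 5" where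
  "pi2_mult x y = (\<Sum>i\<in>UNIV. \<Sum>j\<in>UNIV. (x $ i * y $ j) *s pi2_table i j)"

definition is_automorphism :: "complex ^ 5 ^ 5 \<Rightarrow> bool" where
  "is_automorphism A \<longleftrightarrow> invertible A \<and>
     (\<forall>x y. A *v pi2_mult x y = pi2_mult (A *v x) (A *v y))"

definition is_local_automorphism :: "complex ^ 5 ^ 5 \<Rightarrow> bool" where
  "is_local_automorphism A \<longleftrightarrow>
     (\<forall>v. \<exists>\<phi>. is_automorphism \<phi> \<and> A *v v = \<phi> *v v)"

definition LocAut_pi2 :: "(complex ^ 5 ^ 5) set" where
  "LocAut_pi2 = {A. is_local_automorphism A}"

text \<open>Matrix Lie group (B. Hall, Lie Groups, Lie Algebras and Representations, Def. 1.4):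
  a subgroup G of GL(n,C) that is closed in GL(n,C), i.e. every limit of a sequence in G
  is either in G or not invertible.\<close>
definition matrix_Lie_group :: "(complex ^ 'n ^ 'n) set \<Rightarrow> bool" where
  "matrix_Lie_group G \<longleftrightarrow>
     G \<subseteq> {A. invertible A} \<and> mat 1 \<in> G \<and>
     (\<forall>A\<in>G. \<forall>B\<in>G. A ** B \<in> G) \<and> (\<forall>A\<in>G. matrix_inv A \<in> G) \<and>
     (\<forall>X A. (\<forall>m. X m \<in> G) \<longrightarrow> X \<longlonglongrightarrow> A \<longrightarrow> invertible A \<longrightarrow> A \<in> G)"

end

theory Submission
  imports Defs
begin

text \<open>Every automorphism of \<open>\<pi>\<^sub>2\<close> is determined by the images of \<open>e\<^sub>1\<close> and
  \<open>e\<^sub>4\<close>, which gives an explicit seven-parameter family. Evaluating a local automorphism on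
  \<open>e\<^sub>2, \<dots>, e\<^sub>5, e\<^sub>1 - e\<^sub>4, e\<^sub>2 - e\<^sub>5\<close> places it in a linear space \<open>L\<close> of matrices
  cut out by a zero pattern and two linear relations; conversely, every invertible element of
  \<open>L\<close> agrees with some member of the family at each vector. Hence
  \<open>LocAut(\<pi>\<^sub>2) = L \<inter> GL\<^sub>5(\<complex>)\<close>. Now \<open>L\<close> is closed under products and contains the
  identity, and the units of any unital subalgebra of matrices form a closed subgroup of
  \<open>GL\<^sub>n(\<complex>)\<close>: the inverse stays in the subalgebra because left multiplication by an
  invertible element is an injective, hence surjective, linear endomorphism of it, and a
  linear subspace is closed.\<close>

lemma exhaust_5:
  fixes x :: 5
  shows "x = 1 \<or> x = 2 \<or> x = 3 \<or> x = 4 \<or> x = 5"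
proof (induct x)
  case (of_int z)
  then have "z = 0 \<or> z = 1 \<or> z = 2 \<or> z = 3 \<or> z = 4" by fastforce
  then show ?case by auto
qed

lemma forall_5: "(\<forall>i::5. P i) \<longleftrightarrow> P 1 \<and> P 2 \<and> P 3 \<and> P 4 \<and> P 5"
  by (metis exhaust_5)

lemma UNIV_5: "UNIV = {1, 2, 3, 4, 5::5}"
  using exhaust_5 by auto

lemma sum_UNIV_5: "(\<Sum>i\<in>UNIV. f i) = f 1 + f 2 + f 3 + f 4 + (f (5::5) :: 'a::comm_monoid_add)"
  unfolding UNIV_5 by (simp add: add.assoc)

lemma vec_eq_iff_5:
  "x = y \<longleftrightarrow> x$1 = y$1 \<and> x$2 = y$2 \<and> x$3 = y$3 \<and> x$4 = y$4 \<and> x$5 = y$5" for x y :: "'a^5"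
  by (simp add: vec_eq_iff forall_5)

lemma matrix_vector_mult_component_5:
  "((A::'a::semiring_1^5^'m) *v x) $ i =
     A$i$1 * x$1 + A$i$2 * x$2 + A$i$3 * x$3 + A$i$4 * x$4 + A$i$5 * x$5"
  by (simp add: matrix_vector_mult_def sum_UNIV_5)

lemma matrix_matrix_mult_component_5:
  "((A::'a::semiring_1^5^'m) ** B) $ i $ j =
     A$i$1 * B$1$j + A$i$2 * B$2$j + A$i$3 * B$3$j + A$i$4 * B$4$j + A$i$5 * B$5$j"
  by (simp add: matrix_matrix_mult_def sum_UNIV_5)

lemma matrix_vector_mult_basis5: "(A *v basis5 j) $ i = A$i$j"
  by (simp add: matrix_vector_mult_def basis5_def if_distrib cong: if_cong)

lemma matrix_inv_right: "invertible A \<Longrightarrow> A ** matrix_inv A = mat 1"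
  and matrix_inv_left: "invertible A \<Longrightarrow> matrix_inv A ** A = mat 1"
  unfolding invertible_def matrix_inv_def by (metis (mono_tags, lifting) someI_ex)+

lemma invertible_matrix_inv: "invertible A \<Longrightarrow> invertible (matrix_inv A)"
  using matrix_inv_left matrix_inv_right unfolding invertible_def by blast

lemma matrix_inv_unique:
  fixes A B :: "'a::field^'n^'n"
  assumes "A ** B = mat 1"
  shows "matrix_inv A = B"
proof -
  have "invertible A"
    using assms matrix_left_right_inverse unfolding invertible_def by blast
  then have "matrix_inv A = matrix_inv A ** (A ** B)" using assms by simp
  also have "\<dots> = B" using matrix_inv_left[OF \<open>invertible A\<close>] by (simp add: matrix_mul_assoc)
  finally show ?thesis .
qed

lemma linear_matrix_mult_left: "linear (\<lambda>X. (A::'a::real_algebra_1^'n^'m) ** X)"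
  by (rule linearI) (simp_all add: matrix_add_ldistrib matrix_scalar_ac scalar_matrix_assoc)

definition unital_matrix_subalgebra :: "('a::real_algebra_1^'n^'n) set \<Rightarrow> bool" where
  "unital_matrix_subalgebra S \<longleftrightarrow>
     subspace S \<and> mat 1 \<in> S \<and> (\<forall>A\<in>S. \<forall>B\<in>S. A ** B \<in> S)"

lemma matrix_inv_in_unital_matrix_subalgebra:
  fixes S :: "(complex^'n^'n) set"
  assumes S: "unital_matrix_subalgebra S" and A: "A \<in> S" "invertible A"
  shows "matrix_inv A \<in> S"
proof -
  let ?f = "\<lambda>X. A ** X"
  have "inj ?f"
    by (metis A(2) injI matrix_inv_left matrix_mul_assoc matrix_mul_lid)
  then have "dim (?f ` S) = dim S"
    using dim_image_eq linear_matrix_mult_left by (metis inj_on_subset subset_UNIV)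
  moreover have "subspace (?f ` S)"
    using linear_matrix_mult_left S unfolding unital_matrix_subalgebra_def
    by (blast intro: linear_subspace_image)
  moreover have "?f ` S \<subseteq> S" using S A(1) unfolding unital_matrix_subalgebra_def by blast
  ultimately have "?f ` S = S"
    using S subspace_dim_equal unfolding unital_matrix_subalgebra_def by (metis order_refl)
  then obtain X where "X \<in> S" "A ** X = mat 1"
    using S unfolding unital_matrix_subalgebra_def by (metis imageE)
  then show ?thesis using matrix_inv_unique by metis
qed

lemma matrix_Lie_group_units:
  fixes S :: "(complex^'n^'n) set"
  assumes S: "unital_matrix_subalgebra S"
  shows "matrix_Lie_group {A \<in> S. invertible A}"
  unfolding matrix_Lie_group_def
proof (intro conjI ballI allI impI)
  have "invertible (mat 1 :: complex^'n^'n)"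
    unfolding invertible_def using matrix_mul_lid by blast
  then show "mat 1 \<in> {A \<in> S. invertible A}"
    using S unfolding unital_matrix_subalgebra_def by blast
next
  fix A B assume "A \<in> {A \<in> S. invertible A}" "B \<in> {A \<in> S. invertible A}"
  then show "A ** B \<in> {A \<in> S. invertible A}"
    using S invertible_mult unfolding unital_matrix_subalgebra_def by blast
next
  fix A assume "A \<in> {A \<in> S. invertible A}"
  moreover from this have "invertible (matrix_inv A)"
    using invertible_matrix_inv by blast
  ultimately show "matrix_inv A \<in> {A \<in> S. invertible A}"
    using matrix_inv_in_unital_matrix_subalgebra[OF S] by blast
next
  fix X A assume "\<forall>m. X m \<in> {A \<in> S. invertible A}" "X \<longlonglongrightarrow> A" "invertible A"
  moreover have "closed S"
    using S closed_subspace unfolding unital_matrix_subalgebra_def by blast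
  ultimately show "A \<in> {A \<in> S. invertible A}"
    using closed_sequentially[of S X A] by blast
qed auto

lemma pi2_mult_component:
  "pi2_mult x y $ 1 = 0"
  "pi2_mult x y $ 2 = x$1 * y$1"
  "pi2_mult x y $ 3 = x$1 * y$2 + x$2 * y$1"
  "pi2_mult x y $ 4 = 0"
  "pi2_mult x y $ 5 = x$1 * y$4 + x$4 * y$1 + x$4 * y$4"
proof -
  have table: "pi2_table i j $ k =
     (if k = 2 \<and> i = 1 \<and> j = 1 then 1
      else if k = 3 \<and> (i = 1 \<and> j = 2 \<or> i = 2 \<and> j = 1) then 1
      else if k = 5 \<and> (i = 1 \<and> j = 4 \<or> i = 4 \<and> j = 1 \<or> i = 4 \<and> j = 4) then 1 else 0)"
    for i j k
    unfolding pi2_table_def basis5_def by auto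
  have "pi2_mult x y $ k = (\<Sum>i\<in>UNIV. \<Sum>j\<in>UNIV. x$i * y$j * pi2_table i j $ k)" for k
    unfolding pi2_mult_def by simp
  then show "pi2_mult x y $ 1 = 0" "pi2_mult x y $ 2 = x$1 * y$1"
    "pi2_mult x y $ 3 = x$1 * y$2 + x$2 * y$1" "pi2_mult x y $ 4 = 0"
    "pi2_mult x y $ 5 = x$1 * y$4 + x$4 * y$1 + x$4 * y$4"
    by (simp_all only: sum_UNIV_5 table) simp_all
qed

definition row_index :: "5 \<Rightarrow> nat" where
  "row_index i = (if i = 1 then 0 else if i = 2 then 1 else if i = 3 then 2 else if i = 4 then 3 else 4)"

definition mat5 :: "complex list list \<Rightarrow> complex^5^5" where
  "mat5 L = (\<chi> i j. L ! row_index i ! row_index j)"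

definition pi2_aut_matrix ::
    "complex \<Rightarrow> complex \<Rightarrow> complex \<Rightarrow> complex \<Rightarrow> complex \<Rightarrow> complex \<Rightarrow> complex \<Rightarrow> complex^5^5" where
  "pi2_aut_matrix a1 a2 a3 a4 a5 b3 b5 = mat5
     [[a1, 0,             0,    0,       0],
      [a2, a1^2,          0,    0,       0],
      [a3, 2*a1*a2,       a1^3, b3,      0],
      [a4, 0,             0,    a1 + a4, 0],
      [a5, 2*a1*a4 + a4^2, 0,   b5,      (a1 + a4)^2]]"

lemmas pi2_aut_matrix_simps = pi2_aut_matrix_def mat5_def row_index_def

lemma invertible_if_ker_trivial:
  fixes A :: "'a::field^'n^'n"
  assumes "\<And>x. A *v x = 0 \<Longrightarrow> x = 0"
  shows "invertible A"
proof -
  have "inj ((*v) A)"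
    by (rule injI) (metis assms eq_iff_diff_eq_0 matrix_vector_mult_diff_distrib)
  then show ?thesis
    using matrix_left_invertible_injective invertible_left_inverse by blast
qed

lemma is_automorphism_pi2_aut_matrix:
  assumes "a1 \<noteq> 0" "a1 + a4 \<noteq> 0"
  shows "is_automorphism (pi2_aut_matrix a1 a2 a3 a4 a5 b3 b5)"
  unfolding is_automorphism_def
proof
  let ?F = "pi2_aut_matrix a1 a2 a3 a4 a5 b3 b5"
  show "invertible ?F"
  proof (rule invertible_if_ker_trivial)
    fix x assume "?F *v x = 0"
    then have F: "(?F *v x) $ k = 0" for k by simp
    note simps = matrix_vector_mult_component_5 pi2_aut_matrix_simps
    from F[of 1] have 1: "x$1 = 0" using assms by (simp add: simps)
    from F[of 2] F[of 4] 1 have 24: "x$2 = 0" "x$4 = 0" using assms by (simp_all add: simps)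
    from F[of 3] F[of 5] 1 24 have "x$3 = 0" "x$5 = 0" using assms by (simp_all add: simps)
    then show "x = 0" using 1 24 by (simp add: vec_eq_iff_5)
  qed
  show "\<forall>x y. ?F *v pi2_mult x y = pi2_mult (?F *v x) (?F *v y)"
    by (simp add: vec_eq_iff_5 matrix_vector_mult_component_5 pi2_mult_component pi2_aut_matrix_simps;
        simp add: algebra_simps power2_eq_square power3_eq_cube)
qed

lemma automorphism_ker_trivial: "is_automorphism \<phi> \<Longrightarrow> \<phi> *v x = 0 \<Longrightarrow> x = 0"
  unfolding is_automorphism_def by (metis inj_matrix_vector_mult injD matrix_vector_mult_0_right)

lemma automorphism_eq_pi2_aut_matrix:
  assumes "is_automorphism F"
  shows "F = pi2_aut_matrix (F$1$1) (F$2$1) (F$3$1) (F$4$1) (F$5$1) (F$3$4) (F$5$4)"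
    and "F$1$1 \<noteq> 0" and "F$1$1 + F$4$1 \<noteq> 0"
proof -
  have hom: "F *v pi2_mult (basis5 i) (basis5 j) = pi2_mult (F *v basis5 i) (F *v basis5 j)" for i j
    using assms unfolding is_automorphism_def by blast
  note simps = vec_eq_iff_5 matrix_vector_mult_component_5 pi2_mult_component matrix_vector_mult_basis5
  have col2: "F$1$2 = 0 \<and> F$2$2 = F$1$1^2 \<and> F$3$2 = 2*F$1$1*F$2$1 \<and> F$4$2 = 0 \<and>
      F$5$2 = 2*F$1$1*F$4$1 + F$4$1^2"
    using hom[of 1 1] by (simp add: simps; simp add: basis5_def algebra_simps power2_eq_square)
  have col3: "F$1$3 = 0 \<and> F$2$3 = 0 \<and> F$3$3 = F$1$1^3 \<and> F$4$3 = 0 \<and> F$5$3 = 0"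
    using hom[of 1 2] col2
    by (simp add: simps; simp add: basis5_def algebra_simps power2_eq_square power3_eq_cube)
  have col5: "F$1$5 = 0 \<and> F$2$5 = F$1$4^2 \<and> F$3$5 = 2*F$1$4*F$2$4 \<and> F$4$5 = 0 \<and>
      F$5$5 = 2*F$1$4*F$4$4 + F$4$4^2"
    using hom[of 4 4] by (simp add: simps; simp add: basis5_def algebra_simps power2_eq_square)
  have "F$1$4^3 = 0"
    using hom[of 4 5] col5
    by (simp add: simps; simp add: basis5_def algebra_simps power2_eq_square power3_eq_cube)
  then have F14: "F$1$4 = 0" by simp
  have e14: "F$1$1 * F$2$4 = 0 \<and> (F$1$1 + F$4$1) * F$4$4 = F$4$4^2"
    using hom[of 1 4] col5 F14 by (simp add: simps; simp add: basis5_def algebra_simps power2_eq_square)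
  have F11: "F$1$1 \<noteq> 0"
  proof
    assume "F$1$1 = 0"
    then have "F *v basis5 3 = 0" using col3 by (simp add: vec_eq_iff_5 matrix_vector_mult_basis5)
    then have "basis5 3 = 0" by (rule automorphism_ker_trivial[OF assms])
    then show False by (simp add: vec_eq_iff_5 basis5_def)
  qed
  have F44: "F$4$4 \<noteq> 0"
  proof
    assume "F$4$4 = 0"
    then have "F *v basis5 5 = 0" using col5 F14 by (simp add: vec_eq_iff_5 matrix_vector_mult_basis5)
    then have "basis5 5 = 0" by (rule automorphism_ker_trivial[OF assms])
    then show False by (simp add: vec_eq_iff_5 basis5_def)
  qed
  have F24: "F$2$4 = 0" using e14 F11 by simp
  have F44_eq: "F$4$4 = F$1$1 + F$4$1" using e14 F44 by (simp add: power2_eq_square)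
  show "F$1$1 \<noteq> 0" "F$1$1 + F$4$1 \<noteq> 0" using F11 F44 F44_eq by simp_all
  show "F = pi2_aut_matrix (F$1$1) (F$2$1) (F$3$1) (F$4$1) (F$5$1) (F$3$4) (F$5$4)"
    using F44_eq F14 F24 col2 col3 col5 by (simp add: vec_eq_iff forall_5 pi2_aut_matrix_simps)
qed

definition agrees_with_automorphism :: "complex^5^5 \<Rightarrow> complex^5 \<Rightarrow> bool" where
  "agrees_with_automorphism A v \<longleftrightarrow> (\<exists>\<phi>. is_automorphism \<phi> \<and> A *v v = \<phi> *v v)"

lemma is_local_automorphism_iff_agrees:
  "is_local_automorphism A \<longleftrightarrow> (\<forall>v. agrees_with_automorphism A v)"
  unfolding is_local_automorphism_def agrees_with_automorphism_def ..

lemma agrees_with_automorphism_iff_pi2_aut_matrix: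
  "agrees_with_automorphism A v \<longleftrightarrow>
     (\<exists>a1 a2 a3 a4 a5 b3 b5. a1 \<noteq> 0 \<and> a1 + a4 \<noteq> 0 \<and> A *v v = pi2_aut_matrix a1 a2 a3 a4 a5 b3 b5 *v v)"
  unfolding agrees_with_automorphism_def
  using is_automorphism_pi2_aut_matrix automorphism_eq_pi2_aut_matrix by metis

lemma local_automorphism_invertible:
  assumes "is_local_automorphism A"
  shows "invertible A"
proof (rule invertible_if_ker_trivial)
  fix x assume "A *v x = 0"
  moreover obtain \<phi> where "is_automorphism \<phi>" "A *v x = \<phi> *v x"
    using assms unfolding is_local_automorphism_def by blast
  ultimately show "x = 0" using automorphism_ker_trivial by metis
qed

definition pi2_loc_algebra :: "(complex^5^5) set" where
  "pi2_loc_algebra = {A.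
     A$1$2 = 0 \<and> A$1$3 = 0 \<and> A$1$4 = 0 \<and> A$1$5 = 0 \<and> A$2$3 = 0 \<and> A$2$4 = 0 \<and>
     A$2$5 = 0 \<and> A$3$5 = 0 \<and> A$4$2 = 0 \<and> A$4$3 = 0 \<and> A$4$5 = 0 \<and> A$5$3 = 0 \<and>
     A$4$4 = A$1$1 + A$4$1 \<and> A$5$5 = A$2$2 + A$5$2}"

lemma unital_matrix_subalgebra_pi2_loc_algebra: "unital_matrix_subalgebra pi2_loc_algebra"
  unfolding unital_matrix_subalgebra_def
proof (intro conjI ballI)
  show "subspace pi2_loc_algebra"
    unfolding subspace_def pi2_loc_algebra_def by (simp add: scaleR_right_distrib)
  show "mat 1 \<in> pi2_loc_algebra"
    unfolding pi2_loc_algebra_def by (simp add: mat_def)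
  fix A B assume "A \<in> pi2_loc_algebra" "B \<in> pi2_loc_algebra"
  then show "A ** B \<in> pi2_loc_algebra"
    unfolding pi2_loc_algebra_def by (simp add: matrix_matrix_mult_component_5 distrib_left distrib_right)
qed

lemma pi2_loc_algebra_diag_mult:
  assumes "A \<in> pi2_loc_algebra" "B \<in> pi2_loc_algebra"
  shows "(A ** B)$i$i = A$i$i * B$i$i"
  using exhaust_5[of i] assms unfolding pi2_loc_algebra_def
  by (elim disjE) (simp_all add: matrix_matrix_mult_component_5)

lemma pi2_loc_algebra_invertible_diag_nonzero:
  assumes "A \<in> pi2_loc_algebra" "invertible A"
  shows "A$i$i \<noteq> 0"
proof -
  have "matrix_inv A \<in> pi2_loc_algebra"
    using matrix_inv_in_unital_matrix_subalgebra unital_matrix_subalgebra_pi2_loc_algebra assms .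
  then have "A$i$i * matrix_inv A$i$i = (A ** matrix_inv A)$i$i"
    using pi2_loc_algebra_diag_mult[OF assms(1)] by simp
  also have "\<dots> = 1"
    using matrix_inv_right[OF assms(2)] by (simp add: mat_def)
  finally show ?thesis by auto
qed

text \<open>Every automorphism maps \<open>e\<^sub>1 - e\<^sub>4\<close> to a vector whose fourth coordinate is minus
  its first, and \<open>e\<^sub>2 - e\<^sub>5\<close> to one whose fifth coordinate is minus its second; this gives
  the two linear relations.\<close>

lemma local_automorphism_in_pi2_loc_algebra:
  assumes "is_local_automorphism A"
  shows "A \<in> pi2_loc_algebra"
proof -
  have agree: "\<exists>a1 a2 a3 a4 a5 b3 b5. A *v v = pi2_aut_matrix a1 a2 a3 a4 a5 b3 b5 *v v" for v
    using assms agrees_with_automorphism_iff_pi2_aut_matrix is_local_automorphism_iff_agrees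
    by blast
  note col = vec_eq_iff_5 matrix_vector_mult_basis5 pi2_aut_matrix_simps
  note vec = vec_eq_iff_5 matrix_vector_mult_component_5 pi2_aut_matrix_simps basis5_def
  have "A$1$2 = 0 \<and> A$4$2 = 0" using agree[of "basis5 2"] by (auto simp: col)
  moreover have "A$1$3 = 0 \<and> A$2$3 = 0 \<and> A$4$3 = 0 \<and> A$5$3 = 0"
    using agree[of "basis5 3"] by (auto simp: col)
  moreover have c4: "A$1$4 = 0 \<and> A$2$4 = 0" using agree[of "basis5 4"] by (auto simp: col)
  moreover have c5: "A$1$5 = 0 \<and> A$2$5 = 0 \<and> A$3$5 = 0 \<and> A$4$5 = 0"
    using agree[of "basis5 5"] by (auto simp: col)
  moreover have "A$4$4 = A$1$1 + A$4$1"
    using agree[of "basis5 1 - basis5 4"] c4 by (auto simp: vec algebra_simps)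
  moreover have "A$5$5 = A$2$2 + A$5$2"
    using agree[of "basis5 2 - basis5 5"] c5 by (auto simp: vec algebra_simps power2_eq_square)
  ultimately show ?thesis unfolding pi2_loc_algebra_def by simp
qed

lemma agrees_with_automorphismI:
  assumes "a1 \<noteq> 0" "a1 + a4 \<noteq> 0" "A *v v = pi2_aut_matrix a1 a2 a3 a4 a5 b3 b5 *v v"
  shows "agrees_with_automorphism A v"
  using assms agrees_with_automorphism_iff_pi2_aut_matrix by blast

text \<open>The diagonal of \<open>pi2_aut_matrix\<close> is \<open>a1, a1\<^sup>2, a1\<^sup>3, a1 + a4, (a1 + a4)\<^sup>2\<close>, while
  \<open>a2, a3, a5, b3, b5\<close> only occur off the diagonal in columns 1 and 4. So \<open>a1\<close> and \<open>a4\<close> are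
  read off the diagonal of \<open>A\<close> (as roots where needed), and the free parameters are solved
  for from the first nonzero coordinate among \<open>v$1, v$4, v$2\<close>.\<close>

lemma agrees_with_automorphism_coord1:
  assumes "A \<in> pi2_loc_algebra" "\<forall>i. A$i$i \<noteq> 0" "v$1 \<noteq> 0"
  shows "agrees_with_automorphism A v"
proof -
  define a1 where "a1 = A$1$1"
  define a4 where "a4 = A$4$1"
  define a2 where "a2 = A$2$1 + (A$2$2 - a1^2) * v$2 / v$1"
  define a3 where "a3 = (A$3$1 * v$1 + A$3$2 * v$2 + A$3$3 * v$3 + A$3$4 * v$4
    - 2 * v$2 * a1 * a2 - v$3 * a1^3) / v$1"
  define a5 where "a5 = (A$5$1 * v$1 + A$5$2 * v$2 + A$5$4 * v$4 + A$5$5 * v$5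
    - v$2 * (2*a1*a4 + a4^2) - v$5 * (a1 + a4)^2) / v$1"
  show ?thesis
  proof (rule agrees_with_automorphismI[of a1 a4 A v a2 a3 a5 0 0])
    show "a1 \<noteq> 0" "a1 + a4 \<noteq> 0"
      using assms(1,2) unfolding pi2_loc_algebra_def a1_def a4_def by auto
    show "A *v v = pi2_aut_matrix a1 a2 a3 a4 a5 0 0 *v v"
      using assms(1,3) unfolding pi2_loc_algebra_def
      by (simp add: vec_eq_iff_5 matrix_vector_mult_component_5 pi2_aut_matrix_simps
          a1_def a2_def a3_def a4_def a5_def field_simps)
  qed
qed

lemma agrees_with_automorphism_coord4:
  assumes "A \<in> pi2_loc_algebra" "\<forall>i. A$i$i \<noteq> 0" "v$1 = 0" "v$4 \<noteq> 0"
  shows "agrees_with_automorphism A v"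
proof -
  define a1 where "a1 = csqrt (A$2$2)"
  define a4 where "a4 = A$4$4 - a1"
  define b3 where "b3 = (A$3$2 * v$2 + A$3$3 * v$3 + A$3$4 * v$4 - v$3 * a1^3) / v$4"
  define b5 where "b5 = (A$5$2 * v$2 + A$5$4 * v$4 + A$5$5 * v$5
    - v$2 * (2*a1*a4 + a4^2) - v$5 * (a1 + a4)^2) / v$4"
  have sq: "a1^2 = A$2$2" by (simp add: a1_def)
  show ?thesis
  proof (rule agrees_with_automorphismI[of a1 a4 A v 0 0 0 b3 b5])
    show "a1 \<noteq> 0" "a1 + a4 \<noteq> 0"
      using assms(2) by (auto simp: a1_def a4_def)
    show "A *v v = pi2_aut_matrix a1 0 0 a4 0 b3 b5 *v v"
      using assms(1,3,4) sq unfolding pi2_loc_algebra_def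
      by (simp add: vec_eq_iff_5 matrix_vector_mult_component_5 pi2_aut_matrix_simps
          b3_def b5_def a4_def field_simps)
  qed
qed

lemma agrees_with_automorphism_coord2:
  assumes "A \<in> pi2_loc_algebra" "\<forall>i. A$i$i \<noteq> 0" "v$1 = 0" "v$4 = 0" "v$2 \<noteq> 0"
  shows "agrees_with_automorphism A v"
proof -
  define a1 where "a1 = csqrt (A$2$2)"
  define a4 where "a4 = csqrt (A$5$5) - a1"
  define a2 where "a2 = (A$3$2 * v$2 + A$3$3 * v$3 - v$3 * a1^3) / (2 * v$2 * a1)"
  have sq: "a1^2 = A$2$2" "(a1 + a4)^2 = A$5$5" by (simp_all add: a1_def a4_def)
  have "a1 \<noteq> 0" "a1 + a4 \<noteq> 0"
    using assms(2) by (auto simp: a1_def a4_def)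
  moreover have "2*a1*a4 + a4^2 = (a1 + a4)^2 - a1^2"
    by (simp add: algebra_simps power2_eq_square)
  ultimately show ?thesis
    using assms(1,3-5) sq unfolding pi2_loc_algebra_def
    by (intro agrees_with_automorphismI[of a1 a4 A v a2 0 0 0 0])
      (simp_all add: vec_eq_iff_5 matrix_vector_mult_component_5 pi2_aut_matrix_simps a2_def field_simps)
qed

lemma agrees_with_automorphism_coord35:
  assumes "A \<in> pi2_loc_algebra" "\<forall>i. A$i$i \<noteq> 0" "v$1 = 0" "v$4 = 0" "v$2 = 0"
  shows "agrees_with_automorphism A v"
proof -
  obtain a1 where a1: "A$3$3 = a1^3" using exists_complex_root[of 3 "A$3$3"] by auto
  define a4 where "a4 = csqrt (A$5$5) - a1"
  have sq: "(a1 + a4)^2 = A$5$5" by (simp add: a4_def)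
  show ?thesis
  proof (rule agrees_with_automorphismI[of a1 a4 A v 0 0 0 0 0])
    show "a1 \<noteq> 0" "a1 + a4 \<noteq> 0"
      using assms(2) a1 by (auto simp: a4_def)
    show "A *v v = pi2_aut_matrix a1 0 0 a4 0 0 0 *v v"
      using assms(1,3-5) a1 sq unfolding pi2_loc_algebra_def
      by (simp add: vec_eq_iff_5 matrix_vector_mult_component_5 pi2_aut_matrix_simps)
  qed
qed

lemma local_automorphism_if_diag_nonzero:
  assumes "A \<in> pi2_loc_algebra" "\<forall>i. A$i$i \<noteq> 0"
  shows "is_local_automorphism A"
  unfolding is_local_automorphism_iff_agrees
  using agrees_with_automorphism_coord1 agrees_with_automorphism_coord4
    agrees_with_automorphism_coord2 agrees_with_automorphism_coord35 assms
  by blast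

lemma LocAut_pi2_eq: "LocAut_pi2 = {A \<in> pi2_loc_algebra. invertible A}"
  unfolding LocAut_pi2_def
  using local_automorphism_in_pi2_loc_algebra local_automorphism_invertible
    local_automorphism_if_diag_nonzero pi2_loc_algebra_invertible_diag_nonzero
  by blast

theorem theorem7p5:
  shows "matrix_Lie_group LocAut_pi2"
  unfolding LocAut_pi2_eq
  using unital_matrix_subalgebra_pi2_loc_algebra by (rule matrix_Lie_group_units)

end
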